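(* Let $\rho_1,\dots,\rho_\omega>0$, $\gamma\in(0,1)$, and let $\rho_{total}=\sum_{i=1}^{\omega}\rho_i$. Then the SafeTab-P algorithm (described in the context) with privacy-loss parameters $\rho_1,\dots,\rho_\omega$ and fraction $\gamma$ satisfies bounded $2\rho_{total}$-zCDP with respect to its input dataset.
   Context: Records come from a domain $\mathcal{I}$; each record has (among other attributes) a sex in $\{\text{Male},\text{Female}\}$ and an age. A dataset $x$ is a finite multiset of records. Two datasets $x,x'$ are bounded neighbors if they contain the same number of records and are identical except for a single record (one record replaced by another). For $\alpha>1$, $D_\alpha(P\|Q)=\frac{1}{\alpha-1}\log\left(\mathbb{E}_{y\sim P}[(P(y)/Q(y))^{\alpha-1}]\right)$; a randomized algorithm $M$ satisfies bounded $\rho$-zCDP if $D_\alpha(M(x)\|M(x'))\le\alpha\rho$ for all bounded neighbors $x,x'$ and all $\alpha>1$. Discrete Gaussian: $\mathcal{N}_{\mathbb{Z}}(\sigma^2)$ on $\mathbb{Z}$ has $\Pr[X=x]\propto e^{-x^2/(2\sigma^2)}$. For $a\in\mathbb{Z}^n$, $\textsc{NoisyCount}(a,\rho)=a+Y$ with $Y$ having $n$ independent $\mathcal{N}_{\mathbb{Z}}(1/(2\rho))$ coordinates. Setup: there are finite sets (population group levels) $\mathcal{P}_1,\dots,\mathcal{P}_\omega$ of population groups, maps $g_i:\mathcal{I}\to 2^{\mathcal{P}_i}$ assigning to each record the population groups in level $i$ it belongs to, with stability $s_i=\max_{r\in\mathcal{I}}|g_i(r)|\ge 1$ (a data-independent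 quantity). There is a fixed (data-independent) set $\mathrm{TotalOnly}$ of population groups, thresholds $\Theta_1,\Theta_2,\Theta_3$, and age-bucketing maps $b_4,b_9,b_{23}$ sending ages into $4$, $9$, $23$ bins. For a multiset $y$ of records, $h_K(y)\in\mathbb{Z}^{2K}$ is its histogram over (sex, $b_K(\text{age})$). Procedure $\textsc{Tab}(y,P,\rho,\gamma)$: if $P\in\mathrm{TotalOnly}$ output $\textsc{NoisyCount}(|y|,\rho)$; otherwise let $t=\textsc{NoisyCount}(|y|,\gamma\rho)$ and output $\textsc{NoisyCount}(|y|,(1-\gamma)\rho)$ if $t<\Theta_1$, else $\textsc{NoisyCount}(h_4(y),(1-\gamma)\rho)$ if $t<\Theta_2$, else $\textsc{NoisyCount}(h_9(y),(1-\gamma)\rho)$ if $t<\Theta_3$, else $\textsc{NoisyCount}(h_{23}(y),(1-\gamma)\rho)$. SafeTab-P on dataset $x$: for each $i=1,\dots,\omega$ and each $P\in\mathcal{P}_i$, let $x_P$ be the multiset of records $r\in x$ (with multiplicity) such that $P\in g_i(r)$, and output $\textsc{Tab}(x_P,P,\rho_i/s_i,\gamma)$. All noise draws across all calls are independent. *)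

theory Defs
  imports "HOL-Probability.Probability" "HOL-Library.Multiset"
begin

datatype sex = Male | Female

definition discrete_gaussian :: "real \<Rightarrow> int pmf" where
  "discrete_gaussian s2 = embed_pmf (\<lambda>x::int.
      exp (- (real_of_int x * real_of_int x) / (2 * s2)) /
      infsum (\<lambda>z::int. exp (- (real_of_int z * real_of_int z) / (2 * s2))) UNIV)"

fun noisy_count :: "int list \<Rightarrow> real \<Rightarrow> int list pmf" where
  "noisy_count [] rho = return_pmf []"
| "noisy_count (a # as) rho =
     bind_pmf (discrete_gaussian (1 / (2 * rho))) (\<lambda>y.
     bind_pmf (noisy_count as rho) (\<lambda>ys. return_pmf ((a + y) # ys)))"

definition hist :: "('r \<Rightarrow> sex) \<Rightarrow> ('r \<Rightarrow> 'a) \<Rightarrow> ('a \<Rightarrow> nat) \<Rightarrow> nat \<Rightarrow> 'r multiset \<Rightarrow> int list" where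
  "hist sex_of age_of b K y =
     [int (size (filter_mset (\<lambda>r. sex_of r = s \<and> b (age_of r) = j) y)). s \<leftarrow> [Male, Female], j \<leftarrow> [0..<K]]"

definition tab ::
  "'p set \<Rightarrow> real \<Rightarrow> real \<Rightarrow> real \<Rightarrow> ('r \<Rightarrow> sex) \<Rightarrow> ('r \<Rightarrow> 'a) \<Rightarrow>
   ('a \<Rightarrow> nat) \<Rightarrow> ('a \<Rightarrow> nat) \<Rightarrow> ('a \<Rightarrow> nat) \<Rightarrow>
   'r multiset \<Rightarrow> 'p \<Rightarrow> real \<Rightarrow> real \<Rightarrow> int list pmf" where
  "tab TotalOnly \<Theta>1 \<Theta>2 \<Theta>3 sex_of age_of b4 b9 b23 y P rho \<gamma> =
     (if P \<in> TotalOnly then noisy_count [int (size y)] rho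
      else bind_pmf (noisy_count [int (size y)] (\<gamma> * rho)) (\<lambda>tl.
        let t = real_of_int (hd tl) in
        if t < \<Theta>1 then noisy_count [int (size y)] ((1 - \<gamma>) * rho)
        else if t < \<Theta>2 then noisy_count (hist sex_of age_of b4 4 y) ((1 - \<gamma>) * rho)
        else if t < \<Theta>3 then noisy_count (hist sex_of age_of b9 9 y) ((1 - \<gamma>) * rho)
        else noisy_count (hist sex_of age_of b23 23 y) ((1 - \<gamma>) * rho)))"

definition stability :: "(nat \<Rightarrow> 'r \<Rightarrow> 'p set) \<Rightarrow> nat \<Rightarrow> nat" where
  "stability g i = Max ((\<lambda>r. card (g i r)) ` UNIV)"

definition safetab_p ::
  "nat \<Rightarrow> (nat \<Rightarrow> 'p set) \<Rightarrow> (nat \<Rightarrow> 'r \<Rightarrow> 'p set) \<Rightarrow>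
   'p set \<Rightarrow> real \<Rightarrow> real \<Rightarrow> real \<Rightarrow> ('r \<Rightarrow> sex) \<Rightarrow> ('r \<Rightarrow> 'a) \<Rightarrow>
   ('a \<Rightarrow> nat) \<Rightarrow> ('a \<Rightarrow> nat) \<Rightarrow> ('a \<Rightarrow> nat) \<Rightarrow>
   (nat \<Rightarrow> real) \<Rightarrow> real \<Rightarrow> 'r multiset \<Rightarrow> (nat \<times> 'p \<Rightarrow> int list) pmf" where
  "safetab_p \<omega> Pl g TotalOnly \<Theta>1 \<Theta>2 \<Theta>3 sex_of age_of b4 b9 b23 rho \<gamma> x =
     Pi_pmf (SIGMA i:{1..\<omega>}. Pl i) []
       (\<lambda>(i, P). tab TotalOnly \<Theta>1 \<Theta>2 \<Theta>3 sex_of age_of b4 b9 b23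
                   (filter_mset (\<lambda>r. P \<in> g i r) x) P (rho i / real (stability g i)) \<gamma>)"

definition renyi_div :: "real \<Rightarrow> 'b pmf \<Rightarrow> 'b pmf \<Rightarrow> ereal" where
  "renyi_div \<alpha> P Q =
     (if set_pmf P \<subseteq> set_pmf Q then
        (let S = (\<integral>\<^sup>+ y. ennreal ((pmf P y / pmf Q y) powr (\<alpha> - 1)) \<partial>measure_pmf P)
         in if S = \<top> then \<infinity> else ereal (ln (enn2real S) / (\<alpha> - 1)))
      else \<infinity>)"

definition bounded_neighbors :: "'r multiset \<Rightarrow> 'r multiset \<Rightarrow> bool" where
  "bounded_neighbors x x' \<longleftrightarrow> size x = size x' \<and>
     (\<exists>z r r'. x = add_mset r z \<and> x' = add_mset r' z)"

definition bounded_zCDP :: "('r multiset \<Rightarrow> 'b pmf) \<Rightarrow> real \<Rightarrow> bool" where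
  "bounded_zCDP M rho \<longleftrightarrow>
     (\<forall>x x'. bounded_neighbors x x' \<longrightarrow> (\<forall>\<alpha>>1. renyi_div \<alpha> (M x) (M x') \<le> ereal (\<alpha> * rho)))"

end

theory Submission
  imports Defs "HOL-Library.Nat_Bijection"
begin

text \<open>
  Renyi divergence is handled through the moment \<open>\<Sum>\<^sub>y P(y)\<^sup>\<alpha> Q(y)\<^sup>1\<^sup>-\<^sup>\<alpha>\<close>. By joint convexity of
  \<open>(a, b) \<mapsto> a\<^sup>\<alpha> b\<^sup>1\<^sup>-\<^sup>\<alpha>\<close>, the moment of a two-stage (adaptive) experiment is at most the product of
  the moments of its stages, so privacy costs add under sequential composition and under the
  product of independent runs.

  For discrete Gaussians of variance \<open>1/(2\<rho>)\<close> centred at integers \<open>a\<close> and \<open>b\<close>, the moment is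
  \<open>exp ((\<alpha> - 1) \<alpha> \<rho> (a - b)\<^sup>2)\<close> times a ratio \<open>\<theta>(c) / \<theta>(0)\<close> of Gaussian theta sums, and
  \<open>\<theta>(c) \<le> \<theta>(0)\<close>. So NoisyCount costs \<open>\<alpha> \<rho>\<close> times the squared distance of its inputs, and a call
  of Tab costs \<open>\<alpha> \<rho>\<close> times the number of the two exchanged records that belong to its group. A
  record lies in at most \<open>s\<^sub>i\<close> groups of level \<open>i\<close>, each run with budget \<open>\<rho>\<^sub>i / s\<^sub>i\<close>, so the total
  cost is at most \<open>\<alpha> \<cdot> 2 \<Sum>\<^sub>i \<rho>\<^sub>i\<close>.
\<close>

definition renyi_moment :: "real \<Rightarrow> 'a pmf \<Rightarrow> 'a pmf \<Rightarrow> ennreal" where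
  "renyi_moment \<alpha> P Q = (\<integral>\<^sup>+ y. ennreal (pmf P y powr \<alpha> * pmf Q y powr (1 - \<alpha>)) \<partial>count_space UNIV)"

text \<open>\<open>renyi_bounded \<alpha> P Q \<epsilon>\<close> says \<open>D\<^sub>\<alpha>(P\<parallel>Q) \<le> \<epsilon>\<close> in the multiplicative form that composes.
  Since \<open>0 powr _ = 0\<close>, the moment ignores points outside the support of \<open>Q\<close>, hence the explicit
  support condition.\<close>
definition renyi_bounded :: "real \<Rightarrow> 'a pmf \<Rightarrow> 'a pmf \<Rightarrow> real \<Rightarrow> bool" where
  "renyi_bounded \<alpha> P Q \<epsilon> \<longleftrightarrow>
     set_pmf P \<subseteq> set_pmf Q \<and> renyi_moment \<alpha> P Q \<le> ennreal (exp ((\<alpha> - 1) * \<epsilon>))"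

lemma renyi_div_le_if_renyi_bounded:
  assumes "\<alpha> > 1" and bounded: "renyi_bounded \<alpha> P Q \<epsilon>" and "\<epsilon> \<ge> 0"
  shows "renyi_div \<alpha> P Q \<le> ereal \<epsilon>"
proof -
  have supp: "set_pmf P \<subseteq> set_pmf Q" using bounded by (simp add: renyi_bounded_def)
  define S where "S = (\<integral>\<^sup>+ y. ennreal ((pmf P y / pmf Q y) powr (\<alpha> - 1)) \<partial>measure_pmf P)"
  have "ennreal (pmf P y) * ennreal ((pmf P y / pmf Q y) powr (\<alpha> - 1)) =
        ennreal (pmf P y powr \<alpha> * pmf Q y powr (1 - \<alpha>))" for y
  proof (cases "y \<in> set_pmf P")
    case True
    then have "pmf P y > 0" "pmf Q y > 0" using supp by (auto simp: pmf_positive)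
    then show ?thesis
      by (simp add: ennreal_mult[symmetric] powr_divide powr_diff powr_minus_divide field_simps)
  qed (simp add: set_pmf_iff)
  then have "S = renyi_moment \<alpha> P Q"
    by (simp add: S_def renyi_moment_def nn_integral_measure_pmf)
  then have S_le: "S \<le> ennreal (exp ((\<alpha> - 1) * \<epsilon>))"
    using bounded by (simp add: renyi_bounded_def)
  then have "S \<noteq> \<top>" by (auto simp: top_unique)
  have "ln (enn2real S) \<le> (\<alpha> - 1) * \<epsilon>"
  proof (cases "enn2real S > 0")
    case True
    moreover have "enn2real S \<le> exp ((\<alpha> - 1) * \<epsilon>)" using S_le by (simp add: enn2real_leI)
    ultimately show ?thesis by (metis ln_exp ln_le_cancel_iff exp_gt_zero)
  next
    case False
    then have "enn2real S = 0" using enn2real_nonneg[of S] by linarith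
    then show ?thesis using assms by simp
  qed
  then have "ln (enn2real S) / (\<alpha> - 1) \<le> \<epsilon>"
    using assms by (simp add: divide_le_eq mult.commute)
  then show ?thesis
    unfolding renyi_div_def using supp \<open>S \<noteq> \<top>\<close> by (simp add: S_def Let_def)
qed

lemma renyi_bounded_mono:
  "renyi_bounded \<alpha> P Q \<epsilon> \<Longrightarrow> \<alpha> \<ge> 1 \<Longrightarrow> \<epsilon> \<le> \<epsilon>' \<Longrightarrow> renyi_bounded \<alpha> P Q \<epsilon>'"
  unfolding renyi_bounded_def
  by (meson ennreal_leI exp_le_cancel_iff mult_left_mono diff_ge_0_iff_ge order_trans)

lemma renyi_bounded_return: "renyi_bounded \<alpha> (return_pmf x) (return_pmf x) 0"
proof -
  have "renyi_moment \<alpha> (return_pmf x) (return_pmf x) = (\<integral>\<^sup>+ y. indicator {x} y \<partial>count_space UNIV)"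
    unfolding renyi_moment_def by (intro nn_integral_cong) (auto simp: pmf_return indicator_def)
  then show ?thesis by (simp add: renyi_bounded_def)
qed

text \<open>Tangent plane of the convex function \<open>(a, b) \<mapsto> a powr \<alpha> * b powr (1 - \<alpha>)\<close> at ratio
  \<open>a / b = r\<close>.\<close>
lemma powr_mix_tangent_le:
  fixes \<alpha> r a b :: real
  assumes "\<alpha> > 1" "r > 0" "a \<ge> 0" "b \<ge> 0" "a > 0 \<Longrightarrow> b > 0"
  shows "\<alpha> * r powr (\<alpha> - 1) * a \<le> a powr \<alpha> * b powr (1 - \<alpha>) + (\<alpha> - 1) * r powr \<alpha> * b"
proof (cases "a = 0")
  case False
  then have "a > 0" "b > 0" using assms by simp_all
  have "(a powr \<alpha> * b powr (1 - \<alpha>)) powr (1/\<alpha>) * (r powr \<alpha> * b) powr ((\<alpha>-1)/\<alpha>)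
      \<le> (1/\<alpha>) * (a powr \<alpha> * b powr (1 - \<alpha>)) + ((\<alpha>-1)/\<alpha>) * (r powr \<alpha> * b)"
    using assms \<open>a > 0\<close> \<open>b > 0\<close> by (intro Youngs_inequality_0) (auto simp: field_simps)
  moreover have "(a powr \<alpha> * b powr (1 - \<alpha>)) powr (1/\<alpha>) * (r powr \<alpha> * b) powr ((\<alpha>-1)/\<alpha>)
      = a * r powr (\<alpha> - 1) * (b powr ((1-\<alpha>)/\<alpha>) * b powr ((\<alpha>-1)/\<alpha>))"
    using assms \<open>a > 0\<close> \<open>b > 0\<close> by (simp add: powr_mult powr_powr)
  moreover have "b powr ((1-\<alpha>)/\<alpha>) * b powr ((\<alpha>-1)/\<alpha>) = 1"
    using assms \<open>b > 0\<close> by (simp add: powr_add[symmetric] field_simps)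
  ultimately have "\<alpha> * (a * r powr (\<alpha> - 1))
      \<le> \<alpha> * ((1/\<alpha>) * (a powr \<alpha> * b powr (1 - \<alpha>)) + ((\<alpha>-1)/\<alpha>) * (r powr \<alpha> * b))"
    using assms by (intro mult_left_mono) auto
  also have "\<dots> = a powr \<alpha> * b powr (1 - \<alpha>) + (\<alpha> - 1) * r powr \<alpha> * b"
    using assms by (simp add: field_simps)
  finally show ?thesis by (simp add: mult_ac)
qed (use assms in simp)

text \<open>Subadditivity of the same convex, positively homogeneous function: add up the tangent planes at
  the ratio \<open>A / B\<close>.\<close>
lemma powr_mix_le_nn_integral_pos:
  fixes a b :: "'t \<Rightarrow> real" and \<alpha> A B :: real
  assumes "\<alpha> > 1" and a_nonneg: "\<And>t. a t \<ge> 0" and b_nonneg: "\<And>t. b t \<ge> 0"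
    and supp: "\<And>t. a t > 0 \<Longrightarrow> b t > 0"
    and A: "(\<integral>\<^sup>+ t. ennreal (a t) \<partial>count_space UNIV) = ennreal A" "A > 0"
    and B: "(\<integral>\<^sup>+ t. ennreal (b t) \<partial>count_space UNIV) = ennreal B" "B > 0"
  shows "ennreal (A powr \<alpha> * B powr (1 - \<alpha>))
     \<le> (\<integral>\<^sup>+ t. ennreal (a t powr \<alpha> * b t powr (1 - \<alpha>)) \<partial>count_space UNIV)"
    (is "_ \<le> ?I")
proof -
  define r where "r = A / B"
  define X where "X = A powr \<alpha> * B powr (1 - \<alpha>)"
  have "r > 0" "X \<ge> 0" using A B by (simp_all add: r_def X_def)
  have scaled: "(\<integral>\<^sup>+ t. ennreal (c * f t) \<partial>count_space UNIV) = ennreal (c * F)"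
    if "c \<ge> 0" "F \<ge> 0" "\<And>t. f t \<ge> 0" "(\<integral>\<^sup>+ t. ennreal (f t) \<partial>count_space UNIV) = ennreal F"
    for c F and f :: "'t \<Rightarrow> real"
    using that by (simp add: ennreal_mult nn_integral_cmult)
  have tangent: "ennreal (\<alpha> * r powr (\<alpha> - 1) * a t)
      \<le> ennreal (a t powr \<alpha> * b t powr (1 - \<alpha>)) + ennreal ((\<alpha> - 1) * r powr \<alpha> * b t)" for t
  proof -
    have "ennreal (\<alpha> * r powr (\<alpha> - 1) * a t)
        \<le> ennreal (a t powr \<alpha> * b t powr (1 - \<alpha>) + (\<alpha> - 1) * r powr \<alpha> * b t)"
      using \<open>\<alpha> > 1\<close> \<open>r > 0\<close> a_nonneg b_nonneg supp by (intro ennreal_leI powr_mix_tangent_le)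
    also have "\<dots> = ennreal (a t powr \<alpha> * b t powr (1 - \<alpha>)) + ennreal ((\<alpha> - 1) * r powr \<alpha> * b t)"
      using \<open>\<alpha> > 1\<close> \<open>r > 0\<close> b_nonneg[of t] by (intro ennreal_plus) auto
    finally show ?thesis .
  qed
  have X_A: "\<alpha> * X = \<alpha> * r powr (\<alpha> - 1) * A" and X_B: "(\<alpha> - 1) * X = (\<alpha> - 1) * r powr \<alpha> * B"
    using A B by (simp_all add: r_def X_def powr_divide powr_diff field_simps)
  have "ennreal (\<alpha> * X) = (\<integral>\<^sup>+ t. ennreal (\<alpha> * r powr (\<alpha> - 1) * a t) \<partial>count_space UNIV)"
    unfolding X_A using \<open>\<alpha> > 1\<close> a_nonneg A by (intro scaled[symmetric]) auto
  also have "\<dots> \<le> (\<integral>\<^sup>+ t. ennreal (a t powr \<alpha> * b t powr (1 - \<alpha>))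
      + ennreal ((\<alpha> - 1) * r powr \<alpha> * b t) \<partial>count_space UNIV)"
    by (intro nn_integral_mono tangent)
  also have "\<dots> = ?I + ennreal ((\<alpha> - 1) * X)"
    unfolding X_B using \<open>\<alpha> > 1\<close> b_nonneg B by (simp add: nn_integral_add scaled)
  finally have "ennreal (\<alpha> * X) \<le> ?I + ennreal ((\<alpha> - 1) * X)" .
  moreover have "ennreal (\<alpha> * X) = ennreal X + ennreal ((\<alpha> - 1) * X)"
    using \<open>X \<ge> 0\<close> \<open>\<alpha> > 1\<close> mult_left_mono[of 1 \<alpha> X]
    by (subst ennreal_plus[symmetric]) (auto simp: algebra_simps)
  ultimately have "ennreal X + ennreal ((\<alpha> - 1) * X) \<le> ?I + ennreal ((\<alpha> - 1) * X)"
    by simp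
  then show ?thesis
    unfolding X_def by (simp add: ennreal_add_left_cancel_le add.commute)
qed

lemma powr_mix_le_nn_integral:
  fixes a b :: "'t \<Rightarrow> real" and \<alpha> A B :: real
  assumes "\<alpha> > 1" and a_nonneg: "\<And>t. a t \<ge> 0" and b_nonneg: "\<And>t. b t \<ge> 0"
    and supp: "\<And>t. a t > 0 \<Longrightarrow> b t > 0"
    and A: "(\<integral>\<^sup>+ t. ennreal (a t) \<partial>count_space UNIV) = ennreal A" "A \<ge> 0"
    and B: "(\<integral>\<^sup>+ t. ennreal (b t) \<partial>count_space UNIV) = ennreal B" "B \<ge> 0"
  shows "ennreal (A powr \<alpha> * B powr (1 - \<alpha>))
     \<le> (\<integral>\<^sup>+ t. ennreal (a t powr \<alpha> * b t powr (1 - \<alpha>)) \<partial>count_space UNIV)"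
proof (cases "A = 0")
  case False
  then have "A > 0" using A by simp
  have "\<exists>t. a t > 0"
  proof (rule ccontr)
    assume "\<nexists>t. a t > 0"
    then have "\<And>t. a t = 0" using a_nonneg by (metis antisym not_less)
    then show False using A \<open>A > 0\<close> by simp
  qed
  then obtain t0 where "a t0 > 0" by blast
  then have "0 < b t0" by (rule supp)
  also have "b t0 \<le> B"
    using nn_integral_ge_point[of t0 UNIV "\<lambda>t. ennreal (b t)"] B by simp
  finally show ?thesis
    using assms \<open>A > 0\<close> by (intro powr_mix_le_nn_integral_pos)
qed simp

lemma renyi_moment_bind_le:
  fixes A A' :: "'t pmf" and K K' :: "'t \<Rightarrow> 'z pmf"
  assumes "\<alpha> > 1" and supp: "set_pmf A \<subseteq> set_pmf A'"
    and supp_K: "\<And>t. t \<in> set_pmf A \<Longrightarrow> set_pmf (K t) \<subseteq> set_pmf (K' t)"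
    and moment_K: "\<And>t. t \<in> set_pmf A \<Longrightarrow> renyi_moment \<alpha> (K t) (K' t) \<le> M"
  shows "renyi_moment \<alpha> (bind_pmf A K) (bind_pmf A' K') \<le> renyi_moment \<alpha> A A' * M"
proof -
  define c where "c t = pmf A t powr \<alpha> * pmf A' t powr (1 - \<alpha>)" for t
  define d where "d t z = pmf (K t) z powr \<alpha> * pmf (K' t) z powr (1 - \<alpha>)" for t z
  have pointwise: "ennreal (pmf (bind_pmf A K) z powr \<alpha> * pmf (bind_pmf A' K') z powr (1 - \<alpha>))
      \<le> (\<integral>\<^sup>+ t. ennreal (c t) * ennreal (d t z) \<partial>count_space UNIV)" for z
  proof -
    have "ennreal (pmf (bind_pmf A K) z powr \<alpha> * pmf (bind_pmf A' K') z powr (1 - \<alpha>))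
      \<le> (\<integral>\<^sup>+ t. ennreal ((pmf A t * pmf (K t) z) powr \<alpha> * (pmf A' t * pmf (K' t) z) powr (1 - \<alpha>))
           \<partial>count_space UNIV)"
    proof (rule powr_mix_le_nn_integral[OF \<open>\<alpha> > 1\<close>])
      fix t assume "pmf A t * pmf (K t) z > 0"
      then have "t \<in> set_pmf A" "z \<in> set_pmf (K t)"
        by (auto simp: set_pmf_iff zero_less_mult_iff)
      then have "t \<in> set_pmf A'" "z \<in> set_pmf (K' t)"
        using supp supp_K by auto
      then show "pmf A' t * pmf (K' t) z > 0"
        by (simp add: pmf_positive)
    qed (auto simp: ennreal_pmf_bind nn_integral_measure_pmf ennreal_mult)
    also have "\<dots> = (\<integral>\<^sup>+ t. ennreal (c t) * ennreal (d t z) \<partial>count_space UNIV)"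
      by (intro nn_integral_cong) (simp add: c_def d_def powr_mult ennreal_mult[symmetric] mult_ac)
    finally show ?thesis .
  qed
  have "renyi_moment \<alpha> (bind_pmf A K) (bind_pmf A' K')
      \<le> (\<integral>\<^sup>+ z. \<integral>\<^sup>+ t. ennreal (c t) * ennreal (d t z) \<partial>count_space UNIV \<partial>count_space UNIV)"
    unfolding renyi_moment_def by (intro nn_integral_mono pointwise)
  also have "\<dots> = (\<integral>\<^sup>+ t. \<integral>\<^sup>+ z. ennreal (c t) * ennreal (d t z) \<partial>count_space UNIV \<partial>count_space UNIV)"
    using nn_integral_fst_count_space[of "\<lambda>(t, z). ennreal (c t) * ennreal (d t z)"]
      nn_integral_snd_count_space[of "\<lambda>(t, z). ennreal (c t) * ennreal (d t z)"]
    by simp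
  also have "\<dots> = (\<integral>\<^sup>+ t. ennreal (c t) * renyi_moment \<alpha> (K t) (K' t) \<partial>count_space UNIV)"
    by (simp add: renyi_moment_def d_def nn_integral_cmult)
  also have "\<dots> \<le> (\<integral>\<^sup>+ t. ennreal (c t) * M \<partial>count_space UNIV)"
  proof (intro nn_integral_mono)
    fix t show "ennreal (c t) * renyi_moment \<alpha> (K t) (K' t) \<le> ennreal (c t) * M"
      using moment_K[of t] by (cases "t \<in> set_pmf A") (auto simp: c_def set_pmf_iff intro: mult_left_mono)
  qed
  also have "\<dots> = renyi_moment \<alpha> A A' * M"
    by (simp add: renyi_moment_def c_def nn_integral_multc)
  finally show ?thesis .
qed

lemma renyi_bounded_bind:
  assumes "\<alpha> > 1" and "renyi_bounded \<alpha> A A' \<epsilon>\<^sub>1"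
    and "\<And>t. t \<in> set_pmf A \<Longrightarrow> renyi_bounded \<alpha> (K t) (K' t) \<epsilon>\<^sub>2"
  shows "renyi_bounded \<alpha> (bind_pmf A K) (bind_pmf A' K') (\<epsilon>\<^sub>1 + \<epsilon>\<^sub>2)"
  unfolding renyi_bounded_def
proof
  show "set_pmf (bind_pmf A K) \<subseteq> set_pmf (bind_pmf A' K')"
    using assms unfolding renyi_bounded_def by auto
  have "renyi_moment \<alpha> (bind_pmf A K) (bind_pmf A' K')
      \<le> renyi_moment \<alpha> A A' * ennreal (exp ((\<alpha> - 1) * \<epsilon>\<^sub>2))"
    using assms by (intro renyi_moment_bind_le) (auto simp: renyi_bounded_def)
  also have "\<dots> \<le> ennreal (exp ((\<alpha> - 1) * \<epsilon>\<^sub>1)) * ennreal (exp ((\<alpha> - 1) * \<epsilon>\<^sub>2))"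
    using assms by (intro mult_right_mono) (auto simp: renyi_bounded_def)
  also have "\<dots> = ennreal (exp ((\<alpha> - 1) * (\<epsilon>\<^sub>1 + \<epsilon>\<^sub>2)))"
    by (simp add: ennreal_mult[symmetric] distrib_left exp_add)
  finally show "renyi_moment \<alpha> (bind_pmf A K) (bind_pmf A' K') \<le> ennreal (exp ((\<alpha> - 1) * (\<epsilon>\<^sub>1 + \<epsilon>\<^sub>2)))" .
qed

lemma renyi_bounded_map:
  assumes "\<alpha> > 1" "renyi_bounded \<alpha> P Q \<epsilon>"
  shows "renyi_bounded \<alpha> (map_pmf f P) (map_pmf f Q) \<epsilon>"
  using renyi_bounded_bind[OF assms renyi_bounded_return] by (simp add: map_pmf_def)

lemma renyi_bounded_pair:
  assumes "\<alpha> > 1" "renyi_bounded \<alpha> A A' \<epsilon>\<^sub>1" "renyi_bounded \<alpha> C C' \<epsilon>\<^sub>2"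
  shows "renyi_bounded \<alpha> (pair_pmf A C) (pair_pmf A' C') (\<epsilon>\<^sub>1 + \<epsilon>\<^sub>2)"
  unfolding pair_pmf_def
  using assms by (intro renyi_bounded_bind renyi_bounded_map[unfolded map_pmf_def])

lemma renyi_bounded_Pi_pmf:
  assumes "\<alpha> > 1" "finite S" "\<And>s. s \<in> S \<Longrightarrow> renyi_bounded \<alpha> (P s) (Q s) (\<epsilon> s)"
  shows "renyi_bounded \<alpha> (Pi_pmf S d P) (Pi_pmf S d Q) (\<Sum>s\<in>S. \<epsilon> s)"
  using assms(2,3)
proof (induction S rule: finite_induct)
  case empty
  then show ?case by (simp add: renyi_bounded_return)
next
  case (insert s S)
  then have "renyi_bounded \<alpha> (map_pmf (\<lambda>(y, f). f(s := y)) (pair_pmf (P s) (Pi_pmf S d P)))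
      (map_pmf (\<lambda>(y, f). f(s := y)) (pair_pmf (Q s) (Pi_pmf S d Q))) (\<epsilon> s + (\<Sum>s\<in>S. \<epsilon> s))"
    using \<open>\<alpha> > 1\<close> by (intro renyi_bounded_map renyi_bounded_pair) auto
  then show ?case using insert by (simp add: Pi_pmf_insert)
qed

lemma borel_measurable_nn_integral_count_space_int[measurable]:
  fixes f :: "int \<Rightarrow> 'a \<Rightarrow> ennreal"
  assumes [measurable]: "\<And>n. f n \<in> borel_measurable M"
  shows "(\<lambda>s. \<integral>\<^sup>+ n. f n s \<partial>count_space UNIV) \<in> borel_measurable M"
proof -
  have "(\<lambda>s. \<integral>\<^sup>+ n. f n s \<partial>count_space UNIV) = (\<lambda>s. \<Sum>k. f (int_decode k) s)"
    by (subst nn_integral_bij_count_space[symmetric, OF bij_int_decode])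
      (simp add: nn_integral_count_space_nat)
  then show ?thesis by simp
qed

lemma nn_integral_lborel_unit_intervals:
  fixes \<phi> :: "real \<Rightarrow> ennreal"
  assumes [measurable]: "\<phi> \<in> borel_measurable borel"
  shows "(\<integral>\<^sup>+ t. \<phi> t \<partial>lborel)
       = (\<integral>\<^sup>+ n. \<integral>\<^sup>+ s. indicator {0..<1} s * \<phi> (s + real_of_int n) \<partial>lborel \<partial>count_space UNIV)"
proof -
  have "\<phi> t = (\<integral>\<^sup>+ n. indicator {0..<1} (t - real_of_int n) * \<phi> t \<partial>count_space UNIV)" for t
  proof -
    have "t - real_of_int n \<in> {0..<1} \<longleftrightarrow> real_of_int n \<le> t \<and> t < real_of_int n + 1" for n
      by auto
    also have "\<dots> n \<longleftrightarrow> \<lfloor>t\<rfloor> = n" for n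
      by (rule floor_eq_iff[symmetric])
    finally have "indicator {0..<1} (t - real_of_int n) * \<phi> t = \<phi> t * indicator {\<lfloor>t\<rfloor>} n" for n
      by (auto simp: indicator_def)
    then show ?thesis by (simp add: nn_integral_cmult_indicator)
  qed
  then have "(\<integral>\<^sup>+ t. \<phi> t \<partial>lborel)
      = (\<integral>\<^sup>+ t. \<integral>\<^sup>+ n. indicator {0..<1} (t - real_of_int n) * \<phi> t \<partial>count_space UNIV \<partial>lborel)"
    by (intro nn_integral_cong) simp
  also have "\<dots> = (\<integral>\<^sup>+ n. \<integral>\<^sup>+ t. indicator {0..<1} (t - real_of_int n) * \<phi> t \<partial>lborel \<partial>count_space UNIV)"
    by (rule nn_integral_count_space_nn_integral) auto
  also have "\<dots> = (\<integral>\<^sup>+ n. \<integral>\<^sup>+ s. indicator {0..<1} s * \<phi> (s + real_of_int n) \<partial>lborel \<partial>count_space UNIV)"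
  proof (rule nn_integral_cong)
    fix n :: int
    have "(\<integral>\<^sup>+ t. indicator {0..<1} (t - real_of_int n) * \<phi> t \<partial>lborel)
       = ennreal \<bar>1\<bar> * (\<integral>\<^sup>+ s. indicator {0..<1} (real_of_int n + 1 * s - real_of_int n)
           * \<phi> (real_of_int n + 1 * s) \<partial>lborel)"
      by (rule nn_integral_real_affine) auto
    then show "(\<integral>\<^sup>+ t. indicator {0..<1} (t - real_of_int n) * \<phi> t \<partial>lborel)
       = (\<integral>\<^sup>+ s. indicator {0..<1} s * \<phi> (s + real_of_int n) \<partial>lborel)"
      by (simp add: add.commute)
  qed
  finally show ?thesis .
qed

lemma nn_integral_gaussian_product:
  fixes a p d :: real
  assumes "a > 0"
  shows "(\<integral>\<^sup>+ t. ennreal (exp (-2*a*(t+p)\<^sup>2)) * ennreal (exp (-2*a*(t+p+d)\<^sup>2)) \<partial>lborel)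
       = ennreal (sqrt (pi / (4*a))) * ennreal (exp (-a*d\<^sup>2))"
proof -
  define \<sigma> where "\<sigma> = sqrt (1/(8*a))"
  define \<mu> where "\<mu> = -(p + d/2)"
  define C where "C = sqrt (pi / (4*a))"
  have "\<sigma> > 0" "C > 0" "\<sigma>\<^sup>2 = 1/(8*a)" using assms by (simp_all add: \<sigma>_def C_def)
  then have density: "normal_density \<mu> \<sigma> t = exp (-4*a*(t+p+d/2)\<^sup>2) / C" for t
    using assms by (simp add: normal_density_def C_def \<mu>_def algebra_simps)
  have "exp (-2*a*(t+p)\<^sup>2) * exp (-2*a*(t+p+d)\<^sup>2) = C * exp (-a*d\<^sup>2) * normal_density \<mu> \<sigma> t" for t
    using \<open>C > 0\<close> by (simp add: density exp_add[symmetric] power2_eq_square algebra_simps)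
  then have "(\<integral>\<^sup>+ t. ennreal (exp (-2*a*(t+p)\<^sup>2)) * ennreal (exp (-2*a*(t+p+d)\<^sup>2)) \<partial>lborel)
      = (\<integral>\<^sup>+ t. ennreal (C * exp (-a*d\<^sup>2)) * ennreal (normal_density \<mu> \<sigma> t) \<partial>lborel)"
    using \<open>C > 0\<close> by (intro nn_integral_cong) (simp add: ennreal_mult[symmetric])
  also have "\<dots> = ennreal (C * exp (-a*d\<^sup>2))"
    using \<open>\<sigma> > 0\<close> by (simp add: nn_integral_cmult nn_integral_eq_integral integrable_normal_density
        integral_normal_density)
  finally show ?thesis using \<open>C > 0\<close> by (simp add: C_def ennreal_mult)
qed

definition gauss_theta :: "real \<Rightarrow> real \<Rightarrow> ennreal" where
  "gauss_theta a c = (\<integral>\<^sup>+ x. ennreal (exp (- a * (real_of_int x - c)\<^sup>2)) \<partial>count_space UNIV)"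

definition gauss_periodic :: "real \<Rightarrow> real \<Rightarrow> real \<Rightarrow> ennreal" where
  "gauss_periodic a p s = (\<integral>\<^sup>+ n. ennreal (exp (-2*a*(s + real_of_int n + p)\<^sup>2)) \<partial>count_space UNIV)"

lemma gauss_periodic_mult:
  "indicator {0..<1} s * (gauss_periodic a p s * gauss_periodic a q s)
     = (\<integral>\<^sup>+ n. \<integral>\<^sup>+ x. indicator {0..<1::real} s * ennreal (exp (-2*a*(s + real_of_int n + p)\<^sup>2))
          * ennreal (exp (-2*a*(s + real_of_int (n + x) + q)\<^sup>2)) \<partial>count_space UNIV \<partial>count_space UNIV)"
proof -
  have "indicator {0..<1} s * (gauss_periodic a p s * gauss_periodic a q s)
      = (\<integral>\<^sup>+ n. indicator {0..<1::real} s * ennreal (exp (-2*a*(s + real_of_int n + p)\<^sup>2))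
          * gauss_periodic a q s \<partial>count_space UNIV)"
    unfolding gauss_periodic_def[of a p]
    by (simp add: nn_integral_cmult[symmetric] nn_integral_multc[symmetric] mult.assoc)
  also have "\<dots> = (\<integral>\<^sup>+ n. \<integral>\<^sup>+ m. indicator {0..<1::real} s * ennreal (exp (-2*a*(s + real_of_int n + p)\<^sup>2))
          * ennreal (exp (-2*a*(s + real_of_int m + q)\<^sup>2)) \<partial>count_space UNIV \<partial>count_space UNIV)"
    unfolding gauss_periodic_def[of a q] by (simp add: nn_integral_cmult[symmetric])
  also have "\<dots> = (\<integral>\<^sup>+ n. \<integral>\<^sup>+ x. indicator {0..<1::real} s * ennreal (exp (-2*a*(s + real_of_int n + p)\<^sup>2))
          * ennreal (exp (-2*a*(s + real_of_int (n + x) + q)\<^sup>2)) \<partial>count_space UNIV \<partial>count_space UNIV)"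
  proof (rule nn_integral_cong)
    fix n :: int
    have "bij_betw (\<lambda>x. n + x) UNIV UNIV"
      by (rule bij_betwI[where g = "\<lambda>x. x - n"]) auto
    then show
      "(\<integral>\<^sup>+ m. indicator {0..<1::real} s * ennreal (exp (-2*a*(s + real_of_int n + p)\<^sup>2))
          * ennreal (exp (-2*a*(s + real_of_int m + q)\<^sup>2)) \<partial>count_space UNIV)
        = (\<integral>\<^sup>+ x. indicator {0..<1::real} s * ennreal (exp (-2*a*(s + real_of_int n + p)\<^sup>2))
          * ennreal (exp (-2*a*(s + real_of_int (n + x) + q)\<^sup>2)) \<partial>count_space UNIV)"
      by (rule nn_integral_bij_count_space[symmetric])
  qed
  finally show ?thesis .
qed

lemma nn_integral_unit_intervals_gaussian_product:
  assumes "a > 0"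
  shows "(\<integral>\<^sup>+ n. \<integral>\<^sup>+ s. indicator {0..<1::real} s * ennreal (exp (-2*a*(s + real_of_int n + p)\<^sup>2))
            * ennreal (exp (-2*a*(s + real_of_int (n + x) + q)\<^sup>2)) \<partial>lborel \<partial>count_space UNIV)
       = ennreal (sqrt (pi / (4*a))) * ennreal (exp (- a * (real_of_int x - (p - q))\<^sup>2))"
proof -
  define d where "d = real_of_int x + q - p"
  define \<phi> where "\<phi> t = ennreal (exp (-2*a*(t+p)\<^sup>2)) * ennreal (exp (-2*a*(t+p+d)\<^sup>2))" for t
  have [measurable]: "\<phi> \<in> borel_measurable borel" unfolding \<phi>_def by measurable
  have "(\<integral>\<^sup>+ n. \<integral>\<^sup>+ s. indicator {0..<1::real} s * ennreal (exp (-2*a*(s + real_of_int n + p)\<^sup>2))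
            * ennreal (exp (-2*a*(s + real_of_int (n + x) + q)\<^sup>2)) \<partial>lborel \<partial>count_space UNIV)
      = (\<integral>\<^sup>+ n. \<integral>\<^sup>+ s. indicator {0..<1} s * \<phi> (s + real_of_int n) \<partial>lborel \<partial>count_space UNIV)"
    unfolding \<phi>_def d_def by (intro nn_integral_cong) (simp add: mult.assoc algebra_simps)
  also have "\<dots> = (\<integral>\<^sup>+ t. \<phi> t \<partial>lborel)"
    by (rule nn_integral_lborel_unit_intervals[symmetric]) simp
  also have "\<dots> = ennreal (sqrt (pi / (4*a))) * ennreal (exp (-a*d\<^sup>2))"
    unfolding \<phi>_def by (rule nn_integral_gaussian_product[OF assms])
  finally show ?thesis by (simp add: d_def algebra_simps)
qed

lemma gauss_theta_correlation:
  assumes "a > 0"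
  shows "(\<integral>\<^sup>+ s. indicator {0..<1} s * (gauss_periodic a p s * gauss_periodic a q s) \<partial>lborel)
       = ennreal (sqrt (pi / (4*a))) * gauss_theta a (p - q)"
proof -
  define H where "H n x s = indicator {0..<1::real} s * ennreal (exp (-2*a*(s + real_of_int n + p)\<^sup>2))
      * ennreal (exp (-2*a*(s + real_of_int (n + x) + q)\<^sup>2))" for n x :: int and s
  have [measurable]: "H n x \<in> borel_measurable borel" for n x unfolding H_def by measurable
  have "(\<integral>\<^sup>+ s. indicator {0..<1} s * (gauss_periodic a p s * gauss_periodic a q s) \<partial>lborel)
      = (\<integral>\<^sup>+ s. \<integral>\<^sup>+ n. \<integral>\<^sup>+ x. H n x s \<partial>count_space UNIV \<partial>count_space UNIV \<partial>lborel)"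
    by (simp add: gauss_periodic_mult H_def)
  also have "\<dots> = (\<integral>\<^sup>+ n. \<integral>\<^sup>+ x. \<integral>\<^sup>+ s. H n x s \<partial>lborel \<partial>count_space UNIV \<partial>count_space UNIV)"
    by (subst nn_integral_count_space_nn_integral)
      (auto intro!: nn_integral_cong nn_integral_count_space_nn_integral)
  also have "\<dots> = (\<integral>\<^sup>+ x. \<integral>\<^sup>+ n. \<integral>\<^sup>+ s. H n x s \<partial>lborel \<partial>count_space UNIV \<partial>count_space UNIV)"
    by (rule nn_integral_count_space_nn_integral[symmetric]) auto
  also have "\<dots> = ennreal (sqrt (pi / (4*a))) * gauss_theta a (p - q)"
    unfolding H_def nn_integral_unit_intervals_gaussian_product[OF assms]
    by (simp add: gauss_theta_def nn_integral_cmult)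
  finally show ?thesis .
qed

lemma ennreal_two_mult_le: "2 * (x * y) \<le> x * x + y * (y::ennreal)"
proof (cases x y rule: ennreal2_cases)
  case (real_real u v)
  have "2 * (u * v) \<le> u * u + v * v" using zero_le_square[of "u - v"] by (simp add: algebra_simps)
  then have "ennreal (2 * (u * v)) \<le> ennreal (u * u + v * v)" by (rule ennreal_leI)
  then show ?thesis
    using real_real by (simp add: ennreal_mult ennreal_plus[symmetric])
qed (simp_all add: ennreal_top_mult)

text \<open>Since \<open>\<theta>(p - q)\<close> is the correlation of the periodic functions \<open>gauss_periodic a p\<close> and
  \<open>gauss_periodic a q\<close>, this is AM-GM (Cauchy-Schwarz) under the integral.\<close>
lemma gauss_theta_le_centred:
  assumes "a > 0"
  shows "gauss_theta a c \<le> gauss_theta a 0"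
proof -
  define K where "K = sqrt (pi / (4*a))"
  define G where "G = gauss_periodic a"
  define I where "I = (indicator {0..<1} :: real \<Rightarrow> ennreal)"
  have [measurable]: "G p \<in> borel_measurable borel" for p
    unfolding G_def gauss_periodic_def by measurable
  have correlation: "(\<integral>\<^sup>+ s. I s * (G p s * G q s) \<partial>lborel) = ennreal K * gauss_theta a (p - q)" for p q
    unfolding I_def G_def K_def by (rule gauss_theta_correlation[OF assms])
  have "K > 0" using assms by (simp add: K_def)
  have "2 * (ennreal K * gauss_theta a c) = (\<integral>\<^sup>+ s. 2 * (I s * (G c s * G 0 s)) \<partial>lborel)"
    using correlation[of c 0] by (simp add: nn_integral_cmult I_def)
  also have "\<dots> \<le> (\<integral>\<^sup>+ s. I s * (G c s * G c s) + I s * (G 0 s * G 0 s) \<partial>lborel)"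
    by (intro nn_integral_mono)
      (metis distrib_left ennreal_two_mult_le mult.left_commute mult_left_mono zero_le)
  also have "\<dots> = 2 * (ennreal K * gauss_theta a 0)"
    using correlation[of c c] correlation[of 0 0] by (simp add: nn_integral_add I_def mult_2)
  finally have "ennreal (2 * K) * gauss_theta a c \<le> ennreal (2 * K) * gauss_theta a 0"
    using \<open>K > 0\<close> by (simp add: ennreal_mult mult.assoc)
  then show ?thesis using \<open>K > 0\<close> by (simp add: ennreal_mult_le_mult_iff)
qed

lemma real_le_abs_int_decode: "real k \<le> 2 * \<bar>real_of_int (int_decode k)\<bar> + 1"
  unfolding int_decode_def sum_decode_def by (cases "even k") (auto elim!: evenE oddE)

lemma gauss_theta_finite:
  assumes "a > 0"
  shows "gauss_theta a 0 < \<infinity>"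
proof -
  define q where "q = exp (- a / 2)"
  have "0 < q" "q < 1" using assms by (auto simp: q_def)
  have term_le: "exp (- a * (real_of_int (int_decode k))\<^sup>2) \<le> exp (a / 2) * q ^ k" for k
  proof -
    define x where "x = real_of_int (int_decode k)"
    have "\<bar>x\<bar> \<le> x\<^sup>2"
    proof (cases "x = 0")
      case False
      then have "1 \<le> \<bar>x\<bar>" by (simp add: x_def)
      then have "\<bar>x\<bar> * 1 \<le> \<bar>x\<bar> * \<bar>x\<bar>" by (intro mult_left_mono) auto
      then show ?thesis by (simp add: power2_eq_square abs_mult_self_eq)
    qed simp
    then have "exp (- a * x\<^sup>2) \<le> exp (- a * \<bar>x\<bar>)" using assms by simp
    also have "\<dots> \<le> exp (- a * ((real k - 1) / 2))"
    proof -
      have "a * real k \<le> a * (2 * \<bar>x\<bar> + 1)"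
        using real_le_abs_int_decode[of k] assms unfolding x_def by (intro mult_left_mono) auto
      then show ?thesis by (simp add: field_simps)
    qed
    also have "\<dots> = exp (a / 2) * q ^ k"
      by (simp add: q_def exp_of_nat_mult[symmetric] exp_add[symmetric] field_simps)
    finally show ?thesis by (simp add: x_def)
  qed
  have "gauss_theta a 0 = (\<Sum>k. ennreal (exp (- a * (real_of_int (int_decode k))\<^sup>2)))"
    unfolding gauss_theta_def
    by (subst nn_integral_bij_count_space[OF bij_int_decode, symmetric])
      (simp add: nn_integral_count_space_nat)
  also have "\<dots> \<le> (\<Sum>k. ennreal (exp (a / 2) * q ^ k))"
    by (intro suminf_le ennreal_leI term_le) auto
  also have "\<dots> = ennreal (\<Sum>k. exp (a / 2) * q ^ k)"
    using \<open>0 < q\<close> \<open>q < 1\<close> by (intro suminf_ennreal2) (auto intro!: summable_mult summable_geometric)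
  also have "\<dots> < \<infinity>" by simp
  finally show ?thesis .
qed

lemma one_le_gauss_theta: "1 \<le> gauss_theta a 0"
  using nn_integral_ge_point[of 0 UNIV "\<lambda>x. ennreal (exp (- a * (real_of_int x - 0)\<^sup>2))"]
  by (simp add: gauss_theta_def)

lemma pmf_discrete_gaussian:
  assumes "\<rho> > 0"
  shows "pmf (discrete_gaussian (1 / (2 * \<rho>))) z
       = exp (- \<rho> * (real_of_int z)\<^sup>2) / enn2real (gauss_theta \<rho> 0)"
proof -
  define e where "e x = exp (- \<rho> * (real_of_int x)\<^sup>2)" for x :: int
  define Z where "Z = enn2real (gauss_theta \<rho> 0)"
  have e_eq: "exp (- (real_of_int x * real_of_int x) / (2 * (1 / (2 * \<rho>)))) = e x" for x
    using assms by (simp add: e_def power2_eq_square field_simps)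
  have theta: "gauss_theta \<rho> 0 = (\<integral>\<^sup>+ x. ennreal (e x) \<partial>count_space UNIV)"
    by (simp add: gauss_theta_def e_def)
  have finite: "gauss_theta \<rho> 0 < \<infinity>" using gauss_theta_finite[OF assms] .
  then have theta_Z: "gauss_theta \<rho> 0 = ennreal Z"
    by (simp add: Z_def ennreal_enn2real_if less_top)
  have "Z \<ge> 1" using one_le_gauss_theta[of \<rho>] theta_Z by simp
  have "infsum e UNIV = infsetsum e UNIV"
  proof (rule infsetsum_infsum[symmetric])
    show "Infinite_Set_Sum.abs_summable_on e UNIV" unfolding Infinite_Set_Sum.abs_summable_on_def
      using finite by (intro integrableI_bounded) (simp_all add: theta e_def)
  qed
  also have "\<dots> = Z"
    using finite by (subst infsetsum_conv_nn_integral) (auto simp: Z_def theta e_def)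
  finally have sum_e: "infsum e UNIV = Z" .
  have "(\<integral>\<^sup>+ x. ennreal (e x / Z) \<partial>count_space UNIV) = gauss_theta \<rho> 0 * ennreal (1 / Z)"
    using \<open>Z \<ge> 1\<close> by (simp add: theta divide_inverse ennreal_mult nn_integral_multc e_def)
  also have "\<dots> = 1" using \<open>Z \<ge> 1\<close> by (simp add: theta_Z ennreal_mult[symmetric])
  finally have "(\<integral>\<^sup>+ x. ennreal (e x / Z) \<partial>count_space UNIV) = 1" .
  then show ?thesis
    unfolding discrete_gaussian_def e_eq sum_e
    using \<open>Z \<ge> 1\<close> by (subst pmf_embed_pmf) (auto simp: e_def Z_def)
qed

lemma gaussian_powr_mix:
  fixes \<rho> \<alpha> Z x a b :: real
  assumes "Z > 0"
  shows "(exp (- \<rho> * (x - a)\<^sup>2) / Z) powr \<alpha> * (exp (- \<rho> * (x - b)\<^sup>2) / Z) powr (1 - \<alpha>)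
       = exp (- \<rho> * (x - (\<alpha> * a + (1 - \<alpha>) * b))\<^sup>2) * (exp ((\<alpha> - 1) * (\<alpha> * \<rho> * (a - b)\<^sup>2)) / Z)"
proof -
  have "(exp (- \<rho> * (x - a)\<^sup>2) / Z) powr \<alpha> * (exp (- \<rho> * (x - b)\<^sup>2) / Z) powr (1 - \<alpha>)
      = exp (\<alpha> * (- \<rho> * (x - a)\<^sup>2) + (1 - \<alpha>) * (- \<rho> * (x - b)\<^sup>2)) / Z"
    using assms by (simp add: powr_divide exp_powr_real powr_add[symmetric] exp_add[symmetric]
        mult.commute)
  also have "\<alpha> * (- \<rho> * (x - a)\<^sup>2) + (1 - \<alpha>) * (- \<rho> * (x - b)\<^sup>2)
      = - \<rho> * (x - (\<alpha> * a + (1 - \<alpha>) * b))\<^sup>2 + (\<alpha> - 1) * (\<alpha> * \<rho> * (a - b)\<^sup>2)"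
    by (simp add: power2_eq_square algebra_simps)
  finally show ?thesis
    by (simp only: exp_add times_divide_eq_right)
qed

lemma renyi_bounded_shifted_discrete_gaussian:
  fixes a b :: int
  assumes "\<alpha> > 1" "\<rho> > 0"
  shows "renyi_bounded \<alpha> (map_pmf ((+) a) (discrete_gaussian (1 / (2 * \<rho>))))
           (map_pmf ((+) b) (discrete_gaussian (1 / (2 * \<rho>)))) (\<alpha> * \<rho> * (real_of_int (a - b))\<^sup>2)"
proof -
  define D where "D = discrete_gaussian (1 / (2 * \<rho>))"
  define Z where "Z = enn2real (gauss_theta \<rho> 0)"
  have theta_Z: "gauss_theta \<rho> 0 = ennreal Z"
    using gauss_theta_finite[OF \<open>\<rho> > 0\<close>] by (simp add: Z_def ennreal_enn2real_if less_top)
  have "Z \<ge> 1" using one_le_gauss_theta[of \<rho>] theta_Z by simp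
  have pmf_shift: "pmf (map_pmf ((+) c) D) z = exp (- \<rho> * (real_of_int z - real_of_int c)\<^sup>2) / Z" for c z
    using pmf_map_inj'[of "(+) c" D "z - c"] pmf_discrete_gaussian[OF \<open>\<rho> > 0\<close>, of "z - c"]
    by (simp add: D_def Z_def inj_def)
  have "z \<in> set_pmf (map_pmf ((+) b) D)" for z
    unfolding set_pmf_iff pmf_shift using \<open>Z \<ge> 1\<close> by simp
  then have "set_pmf (map_pmf ((+) a) D) \<subseteq> set_pmf (map_pmf ((+) b) D)" by blast
  define c where "c = \<alpha> * real_of_int a + (1 - \<alpha>) * real_of_int b"
  define M where "M = exp ((\<alpha> - 1) * (\<alpha> * \<rho> * (real_of_int (a - b))\<^sup>2))"
  have mix: "pmf (map_pmf ((+) a) D) z powr \<alpha> * pmf (map_pmf ((+) b) D) z powr (1 - \<alpha>)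
      = exp (- \<rho> * (real_of_int z - c)\<^sup>2) * (M / Z)" for z
    unfolding pmf_shift c_def M_def of_int_diff using \<open>Z \<ge> 1\<close> by (intro gaussian_powr_mix) simp
  have "renyi_moment \<alpha> (map_pmf ((+) a) D) (map_pmf ((+) b) D)
      = (\<integral>\<^sup>+ z. ennreal (exp (- \<rho> * (real_of_int z - c)\<^sup>2)) * ennreal (M / Z) \<partial>count_space UNIV)"
    unfolding renyi_moment_def mix using \<open>Z \<ge> 1\<close>
    by (intro nn_integral_cong ennreal_mult) (auto simp: M_def)
  also have "\<dots> = gauss_theta \<rho> c * ennreal (M / Z)"
    by (simp add: gauss_theta_def nn_integral_multc)
  also have "\<dots> \<le> gauss_theta \<rho> 0 * ennreal (M / Z)"
    by (intro mult_right_mono gauss_theta_le_centred \<open>\<rho> > 0\<close>) simp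
  also have "\<dots> = ennreal M"
    using \<open>Z \<ge> 1\<close> by (simp add: theta_Z ennreal_mult[symmetric] M_def)
  finally show ?thesis
    using \<open>set_pmf (map_pmf ((+) a) D) \<subseteq> _\<close> by (simp add: renyi_bounded_def D_def M_def)
qed

definition sq_dist :: "int list \<Rightarrow> int list \<Rightarrow> int" where
  "sq_dist xs ys = (\<Sum>(x, y)\<leftarrow>zip xs ys. (x - y)\<^sup>2)"

lemma sq_dist_Nil [simp]: "sq_dist [] [] = 0"
  by (simp add: sq_dist_def)

lemma sq_dist_Cons [simp]: "sq_dist (x # xs) (y # ys) = (x - y)\<^sup>2 + sq_dist xs ys"
  by (simp add: sq_dist_def)

lemma renyi_bounded_noisy_count:
  assumes "\<alpha> > 1" "\<rho> > 0" "length as = length bs"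
  shows "renyi_bounded \<alpha> (noisy_count as \<rho>) (noisy_count bs \<rho>) (\<alpha> * \<rho> * sq_dist as bs)"
  using assms(3)
proof (induction as arbitrary: bs)
  case Nil
  then show ?case by (simp add: renyi_bounded_return)
next
  case (Cons a as)
  then obtain b bs' where bs: "bs = b # bs'" and "length as = length bs'"
    by (cases bs) auto
  have noisy_count_Cons: "noisy_count (c # cs) \<rho> = bind_pmf (map_pmf ((+) c) (discrete_gaussian (1 / (2 * \<rho>))))
      (\<lambda>w. map_pmf ((#) w) (noisy_count cs \<rho>))" for c cs
    by (simp add: map_pmf_def bind_assoc_pmf bind_return_pmf)
  have "renyi_bounded \<alpha> (noisy_count (a # as) \<rho>) (noisy_count (b # bs') \<rho>)
      (\<alpha> * \<rho> * (real_of_int (a - b))\<^sup>2 + \<alpha> * \<rho> * sq_dist as bs')"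
    unfolding noisy_count_Cons using assms Cons.IH[OF \<open>length as = length bs'\<close>]
    by (intro renyi_bounded_bind renyi_bounded_shifted_discrete_gaussian renyi_bounded_map)
  then show ?case by (simp add: bs distrib_left)
qed

lemma length_hist: "length (hist so ao b K y) = 2 * K"
  by (simp add: hist_def length_concat sum_list_triv)

lemma renyi_bounded_tab:
  assumes "\<alpha> > 1" "\<rho> > 0" "0 < \<gamma>" "\<gamma> < 1"
    and count_dist: "real_of_int (sq_dist [int (size y)] [int (size y')]) \<le> C"
    and hist_dist: "\<And>b K. real_of_int (sq_dist (hist so ao b K y) (hist so ao b K y')) \<le> C"
  shows "renyi_bounded \<alpha> (tab TotalOnly \<Theta>1 \<Theta>2 \<Theta>3 so ao b4 b9 b23 y P \<rho> \<gamma>)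
           (tab TotalOnly \<Theta>1 \<Theta>2 \<Theta>3 so ao b4 b9 b23 y' P \<rho> \<gamma>) (\<alpha> * \<rho> * C)"
proof -
  have noisy: "renyi_bounded \<alpha> (noisy_count as \<rho>') (noisy_count bs \<rho>') (\<alpha> * \<rho>' * C)"
    if "\<rho>' > 0" "length as = length bs" "real_of_int (sq_dist as bs) \<le> C" for as bs \<rho>'
    using renyi_bounded_noisy_count[OF \<open>\<alpha> > 1\<close> that(1,2)] \<open>\<alpha> > 1\<close> that
    by (elim renyi_bounded_mono) (auto intro: mult_left_mono)
  have count: "renyi_bounded \<alpha> (noisy_count [int (size y)] \<rho>') (noisy_count [int (size y')] \<rho>')
      (\<alpha> * \<rho>' * C)" if "\<rho>' > 0" for \<rho>'
    using noisy that count_dist by (simp del: noisy_count.simps)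
  have hist: "renyi_bounded \<alpha> (noisy_count (hist so ao b K y) \<rho>') (noisy_count (hist so ao b K y') \<rho>')
      (\<alpha> * \<rho>' * C)" if "\<rho>' > 0" for b K \<rho>'
    using noisy that hist_dist by (simp add: length_hist)
  show ?thesis
  proof (cases "P \<in> TotalOnly")
    case True
    then show ?thesis using count \<open>\<rho> > 0\<close> by (simp add: tab_def)
  next
    case False
    have "\<gamma> * \<rho> > 0" "(1 - \<gamma>) * \<rho> > 0" using assms by simp_all
    then have "renyi_bounded \<alpha> (tab TotalOnly \<Theta>1 \<Theta>2 \<Theta>3 so ao b4 b9 b23 y P \<rho> \<gamma>)
        (tab TotalOnly \<Theta>1 \<Theta>2 \<Theta>3 so ao b4 b9 b23 y' P \<rho> \<gamma>)
        (\<alpha> * (\<gamma> * \<rho>) * C + \<alpha> * ((1 - \<gamma>) * \<rho>) * C)"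
      unfolding tab_def Let_def using False \<open>\<alpha> > 1\<close>
      by (simp del: noisy_count.simps add: renyi_bounded_bind count hist)
    then show ?thesis by (simp add: algebra_simps)
  qed
qed

lemma sq_dist_map: "sq_dist (map f xs) (map g xs) = (\<Sum>x\<leftarrow>xs. (f x - g x)\<^sup>2)"
  by (induction xs) auto

lemma sq_dist_hist_filter_add_mset:
  "sq_dist (hist so ao b K (filter_mset \<phi> (add_mset r z))) (hist so ao b K (filter_mset \<phi> (add_mset r' z)))
     \<le> of_bool (\<phi> r) + of_bool (\<phi> r')"
proof -
  define L where "L = List.product [Male, Female] [0..<K]"
  define N where "N l = int (size (filter_mset (\<lambda>x. so x = fst l \<and> b (ao x) = snd l) (filter_mset \<phi> z)))"
    for l
  define I where "I x l = (of_bool (\<phi> x \<and> l = (so x, b (ao x))) :: int)" for x l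
  have hist_L: "hist so ao b K y = map (\<lambda>(s, j). int (size (filter_mset (\<lambda>x. so x = s \<and> b (ao x) = j) y))) L"
    for y
    by (simp add: hist_def L_def)
  have entry: "(\<lambda>(s, j). int (size (filter_mset (\<lambda>x. so x = s \<and> b (ao x) = j) (filter_mset \<phi> (add_mset x z))))) l
      = N l + I x l" for x l
    by (cases l) (auto simp: N_def I_def)
  have at_most_one: "(\<Sum>l\<leftarrow>L. I x l) \<le> of_bool (\<phi> x)" for x
  proof -
    have "distinct L" unfolding L_def by (rule distinct_product) simp_all
    then have "(\<Sum>l\<leftarrow>L. I x l) = (\<Sum>l\<in>set L. I x l)" by (rule sum_list_distinct_conv_sum_set)
    also have "\<dots> \<le> of_bool (\<phi> x)"
      unfolding I_def of_bool_def by (cases "\<phi> x") (simp_all add: sum.delta)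
    finally show ?thesis .
  qed
  have "sq_dist (hist so ao b K (filter_mset \<phi> (add_mset r z))) (hist so ao b K (filter_mset \<phi> (add_mset r' z)))
      = (\<Sum>l\<leftarrow>L. (I r l - I r' l)\<^sup>2)"
    unfolding hist_L sq_dist_map entry by simp
  also have "\<dots> \<le> (\<Sum>l\<leftarrow>L. I r l + I r' l)"
    by (intro sum_list_mono) (auto simp: I_def)
  also have "\<dots> \<le> of_bool (\<phi> r) + of_bool (\<phi> r')"
    by (simp add: sum_list_addf add_mono at_most_one)
  finally show ?thesis .
qed

lemma renyi_bounded_tab_add_mset:
  assumes "\<alpha> > 1" "\<rho> > 0" "0 < \<gamma>" "\<gamma> < 1"
  shows "renyi_bounded \<alpha>
     (tab TotalOnly \<Theta>1 \<Theta>2 \<Theta>3 so ao b4 b9 b23 (filter_mset \<phi> (add_mset r z)) P \<rho> \<gamma>)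
     (tab TotalOnly \<Theta>1 \<Theta>2 \<Theta>3 so ao b4 b9 b23 (filter_mset \<phi> (add_mset r' z)) P \<rho> \<gamma>)
     (\<alpha> * \<rho> * (of_bool (\<phi> r) + of_bool (\<phi> r')))"
  using assms
proof (rule renyi_bounded_tab)
  show "real_of_int (sq_dist (hist so ao b K (filter_mset \<phi> (add_mset r z)))
      (hist so ao b K (filter_mset \<phi> (add_mset r' z)))) \<le> of_bool (\<phi> r) + of_bool (\<phi> r')" for b K
    using sq_dist_hist_filter_add_mset[of so ao b K \<phi> r z r']
    by (metis of_int_le_iff of_int_add of_int_of_bool)
qed auto

lemma card_le_stability:
  assumes "finite (Pl i)" "\<And>r. g i r \<subseteq> Pl i"
  shows "card (g i r) \<le> stability g i"
proof -
  have "(\<lambda>r. card (g i r)) ` UNIV \<subseteq> {..card (Pl i)}"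
    using assms by (auto intro: card_mono)
  then have "finite ((\<lambda>r. card (g i r)) ` UNIV)" by (rule finite_subset) simp
  then show ?thesis unfolding stability_def by (intro Max_ge) auto
qed

lemma sum_memberships_le_stability_budget:
  fixes \<rho> :: "nat \<Rightarrow> real"
  assumes "finite I"
    and "\<And>i. i \<in> I \<Longrightarrow> finite (Pl i)" "\<And>i r. i \<in> I \<Longrightarrow> g i r \<subseteq> Pl i"
    and "\<And>i. i \<in> I \<Longrightarrow> stability g i \<ge> 1" "\<And>i. i \<in> I \<Longrightarrow> \<rho> i \<ge> 0"
  shows "(\<Sum>(i, P)\<in>(SIGMA i:I. Pl i). \<rho> i / stability g i * (of_bool (P \<in> g i r) + of_bool (P \<in> g i r')))
           \<le> 2 * (\<Sum>i\<in>I. \<rho> i)"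
proof -
  have per_level: "(\<Sum>P\<in>Pl i. \<rho> i / stability g i * (of_bool (P \<in> g i r) + of_bool (P \<in> g i r')))
      \<le> 2 * \<rho> i" if "i \<in> I" for i
  proof -
    have "(\<Sum>P\<in>Pl i. of_bool (P \<in> g i r) + of_bool (P \<in> g i r') :: real)
        = real (card (Pl i \<inter> g i r)) + real (card (Pl i \<inter> g i r'))"
      using assms(2)[OF that] by (simp add: sum.distrib sum_of_bool_eq Collect_mem_eq)
    also have "\<dots> = real (card (g i r)) + real (card (g i r'))"
      using assms(3)[OF that] by (simp add: Int_absorb1)
    also have "\<dots> \<le> 2 * real (stability g i)"
      using card_le_stability[of Pl i g r] card_le_stability[of Pl i g r'] assms(2,3)[OF that]
      by simp
    finally have "\<rho> i / stability g i * (\<Sum>P\<in>Pl i. of_bool (P \<in> g i r) + of_bool (P \<in> g i r'))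
        \<le> \<rho> i / stability g i * (2 * stability g i)"
      using assms(5)[OF that] by (intro mult_left_mono) auto
    also have "\<dots> = 2 * \<rho> i"
      using assms(4)[OF that] by simp
    finally show ?thesis by (simp add: sum_distrib_left)
  qed
  have "(\<Sum>(i, P)\<in>(SIGMA i:I. Pl i). \<rho> i / stability g i * (of_bool (P \<in> g i r) + of_bool (P \<in> g i r')))
      = (\<Sum>i\<in>I. \<Sum>P\<in>Pl i. \<rho> i / stability g i * (of_bool (P \<in> g i r) + of_bool (P \<in> g i r')))"
    using assms(1,2) by (subst sum.Sigma) auto
  also have "\<dots> \<le> (\<Sum>i\<in>I. 2 * \<rho> i)"
    by (rule sum_mono) (rule per_level)
  finally show ?thesis by (simp add: sum_distrib_left)
qed

lemma renyi_bounded_safetab_p_replace: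
  assumes "x = add_mset r z" "x' = add_mset r' z"
    and "\<And>i. i \<in> {1..\<omega>} \<Longrightarrow> finite (Pl i)" "\<And>i. i \<in> {1..\<omega>} \<Longrightarrow> stability g i \<ge> 1"
    and "\<And>i. i \<in> {1..\<omega>} \<Longrightarrow> rho i > 0" "0 < \<gamma>" "\<gamma> < 1" "\<alpha> > 1"
  shows "renyi_bounded \<alpha>
     (safetab_p \<omega> Pl g TotalOnly \<Theta>1 \<Theta>2 \<Theta>3 so ao b4 b9 b23 rho \<gamma> x)
     (safetab_p \<omega> Pl g TotalOnly \<Theta>1 \<Theta>2 \<Theta>3 so ao b4 b9 b23 rho \<gamma> x')
     (\<alpha> * (\<Sum>(i, P)\<in>(SIGMA i:{1..\<omega>}. Pl i).
        rho i / stability g i * (of_bool (P \<in> g i r) + of_bool (P \<in> g i r'))))"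
proof -
  have "renyi_bounded \<alpha>
      (tab TotalOnly \<Theta>1 \<Theta>2 \<Theta>3 so ao b4 b9 b23 (filter_mset (\<lambda>q. P \<in> g i q) x) P
        (rho i / stability g i) \<gamma>)
      (tab TotalOnly \<Theta>1 \<Theta>2 \<Theta>3 so ao b4 b9 b23 (filter_mset (\<lambda>q. P \<in> g i q) x') P
        (rho i / stability g i) \<gamma>)
      (\<alpha> * (rho i / stability g i * (of_bool (P \<in> g i r) + of_bool (P \<in> g i r'))))"
    if "i \<in> {1..\<omega>}" for i P
    unfolding assms(1,2) mult.assoc[symmetric] using assms(4,5)[OF that] assms(6-8)
    by (intro renyi_bounded_tab_add_mset) auto
  then show ?thesis
    unfolding safetab_p_def sum_distrib_left using assms(3,8)
    by (intro renyi_bounded_Pi_pmf finite_SigmaI) (auto simp: case_prod_beta split del: split_of_bool)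
qed

theorem mainTheorem4:
  fixes \<omega> :: nat
    and Pl :: "nat \<Rightarrow> 'p set"
    and g :: "nat \<Rightarrow> 'r \<Rightarrow> 'p set"
    and TotalOnly :: "'p set"
    and \<Theta>1 \<Theta>2 \<Theta>3 :: real
    and sex_of :: "'r \<Rightarrow> sex" and age_of :: "'r \<Rightarrow> 'a"
    and b4 b9 b23 :: "'a \<Rightarrow> nat"
    and rho :: "nat \<Rightarrow> real" and \<gamma> :: real
  assumes "\<And>i. i \<in> {1..\<omega>} \<Longrightarrow> finite (Pl i)"
    and "\<And>i r. i \<in> {1..\<omega>} \<Longrightarrow> g i r \<subseteq> Pl i"
    and "\<And>i. i \<in> {1..\<omega>} \<Longrightarrow> stability g i \<ge> 1"
    and "\<And>a. b4 a < 4" and "\<And>a. b9 a < 9" and "\<And>a. b23 a < 23"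
    and "\<And>i. i \<in> {1..\<omega>} \<Longrightarrow> rho i > 0"
    and "0 < \<gamma>" and "\<gamma> < 1"
  shows "bounded_zCDP (safetab_p \<omega> Pl g TotalOnly \<Theta>1 \<Theta>2 \<Theta>3 sex_of age_of b4 b9 b23 rho \<gamma>)
           (2 * (\<Sum>i = 1..\<omega>. rho i))"
  unfolding bounded_zCDP_def
proof (intro allI impI)
  fix x x' :: "'r multiset" and \<alpha> :: real
  assume "bounded_neighbors x x'" "\<alpha> > 1"
  then obtain z r r' where x: "x = add_mset r z" and x': "x' = add_mset r' z"
    unfolding bounded_neighbors_def by blast
  let ?M = "safetab_p \<omega> Pl g TotalOnly \<Theta>1 \<Theta>2 \<Theta>3 sex_of age_of b4 b9 b23 rho \<gamma>"
  define \<epsilon> where "\<epsilon> = \<alpha> * (2 * (\<Sum>i = 1..\<omega>. rho i))"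
  have "renyi_bounded \<alpha> (?M x) (?M x') (\<alpha> * (\<Sum>(i, P)\<in>(SIGMA i:{1..\<omega>}. Pl i).
      rho i / stability g i * (of_bool (P \<in> g i r) + of_bool (P \<in> g i r'))))"
    by (rule renyi_bounded_safetab_p_replace[OF x x']) (use assms \<open>\<alpha> > 1\<close> in auto)
  moreover have "(\<Sum>(i, P)\<in>(SIGMA i:{1..\<omega>}. Pl i).
      rho i / stability g i * (of_bool (P \<in> g i r) + of_bool (P \<in> g i r'))) \<le> 2 * (\<Sum>i = 1..\<omega>. rho i)"
    using assms by (intro sum_memberships_le_stability_budget) (auto simp: less_imp_le)
  ultimately have "renyi_bounded \<alpha> (?M x) (?M x') \<epsilon>"
    unfolding \<epsilon>_def using \<open>\<alpha> > 1\<close> by (elim renyi_bounded_mono) simp_all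
  moreover have "\<epsilon> \<ge> 0"
    unfolding \<epsilon>_def using assms(7) \<open>\<alpha> > 1\<close>
    by (intro mult_nonneg_nonneg sum_nonneg) (auto simp: less_imp_le)
  ultimately show "renyi_div \<alpha> (?M x) (?M x') \<le> ereal (\<alpha> * (2 * (\<Sum>i = 1..\<omega>. rho i)))"
    unfolding \<epsilon>_def by (rule renyi_div_le_if_renyi_bounded[OF \<open>\<alpha> > 1\<close>])
qed

end
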